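(* Let $G=(V,E)$ be a directed multigraph with arc costs $c$ and gains $\gamma>0$, $u\in V$, and let $G_u$ and $f$ be as in the context. Let $\delta^{(1)}>\delta^{(2)}>\dots>\delta^{(\ell)}$ be real numbers, and for each $i\in[\ell]$ let $P^{(i)}$ be a $u$-$u'$ path in $G_u$ such that the unit flow on $P^{(i)}$ is an optimal solution of the primal LP for $f(\delta^{(i)})$. Then the sequence $(P^{(1)},\dots,P^{(\ell)})$ satisfies subpath monotonicity at $u$: for all $i<j$ and every node $v\ne u$ lying on both $P^{(i)}$ and $P^{(j)}$, $\gamma(P^{(i)}_{uv})\le\gamma(P^{(j)}_{uv})$.
   Context: $G_u$ is obtained from $G$ by splitting $u$ into $u$ (keeping its outgoing arcs) and a new node $u'$ to which all arcs entering $u$ are redirected (with the same costs and gains). For a walk $P$ with arcs $e_1,\dots,e_k$: $c(P):=\sum_i(\prod_{j<i}\gamma_{e_j})c_{e_i}$, $\gamma(P):=\prod_i\gamma_{e_i}$; $P_{uv}$ is the subpath of $P$ from $u$ to $v$. $\mathcal{D}:=\{x\in\mathbb{R}^E_{\ge0}: x(\delta^+(u))=1,\ \sum_{e\in\delta^+(v)}x_e-\sum_{e\in\delta^-(v)}\gamma_ex_e=0\ \forall v\ne u\}$; the primal LP for $f(\delta)$ is $\min\{c^\top x+\delta\sum_{e\in\delta^-(u)}\gamma_ex_e-\delta: x\in\mathcal{D}\}$, with value $f(\delta)$. The unit flow on a $u$-$u'$ path $P$ with arcs $e_1,\dots,e_k$ is the vector $x$ with $x_{e_i}:=\prod_{j<i}\gamma_{e_j}$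 on the corresponding arcs of $G$ and $0$ elsewhere. *)

theory Defs
  imports Complex_Main
begin

text \<open>In the split graph G_u,
  nodes are represented as 'v option: Some v is the original node v, and
  None is the new node u'.\<close>

definition split_head :: "('e \<Rightarrow> 'v) \<Rightarrow> 'v \<Rightarrow> 'e \<Rightarrow> 'v option" where
  "split_head head u e = (if head e = u then None else Some (head e))"

definition split_tail :: "('e \<Rightarrow> 'v) \<Rightarrow> 'e \<Rightarrow> 'v option" where
  "split_tail tail e = Some (tail e)"

definition split_nodes :: "('e \<Rightarrow> 'v) \<Rightarrow> ('e \<Rightarrow> 'v) \<Rightarrow> 'v \<Rightarrow> 'e list \<Rightarrow> 'v option list" where
  "split_nodes tail head u P = split_tail tail (P ! 0) # map (split_head head u) P"

definition is_split_path :: "'e set \<Rightarrow> ('e \<Rightarrow> 'v) \<Rightarrow> ('e \<Rightarrow> 'v) \<Rightarrow> 'v \<Rightarrow> 'e list \<Rightarrow> bool" where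
  "is_split_path E tail head u P \<longleftrightarrow>
     P \<noteq> [] \<and> set P \<subseteq> E \<and>
     split_tail tail (P ! 0) = Some u \<and>
     split_head head u (last P) = None \<and>
     (\<forall>i. Suc i < length P \<longrightarrow> split_head head u (P ! i) = split_tail tail (P ! Suc i)) \<and>
     distinct (split_nodes tail head u P)"

definition walk_gain :: "('e \<Rightarrow> real) \<Rightarrow> 'e list \<Rightarrow> real" where
  "walk_gain \<gamma> P = prod_list (map \<gamma> P)"

definition subpath_to :: "('e \<Rightarrow> 'v) \<Rightarrow> 'e list \<Rightarrow> 'v \<Rightarrow> 'e list" where
  "subpath_to head P v = take (Suc (LEAST k. k < length P \<and> head (P ! k) = v)) P"

definition unit_flow :: "('e \<Rightarrow> real) \<Rightarrow> 'e list \<Rightarrow> 'e \<Rightarrow> real" where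
  "unit_flow \<gamma> P e = (\<Sum>i<length P. if P ! i = e then prod_list (map \<gamma> (take i P)) else 0)"

definition in_D :: "'v set \<Rightarrow> 'e set \<Rightarrow> ('e \<Rightarrow> 'v) \<Rightarrow> ('e \<Rightarrow> 'v) \<Rightarrow> ('e \<Rightarrow> real) \<Rightarrow> 'v
                    \<Rightarrow> ('e \<Rightarrow> real) \<Rightarrow> bool" where
  "in_D V E tail head \<gamma> u x \<longleftrightarrow>
     (\<forall>e\<in>E. 0 \<le> x e) \<and>
     (\<Sum>e\<in>{e\<in>E. tail e = u}. x e) = 1 \<and>
     (\<forall>v\<in>V. v \<noteq> u \<longrightarrow>
        (\<Sum>e\<in>{e\<in>E. tail e = v}. x e) - (\<Sum>e\<in>{e\<in>E. head e = v}. \<gamma> e * x e) = 0)"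

definition lp_obj :: "'e set \<Rightarrow> ('e \<Rightarrow> 'v) \<Rightarrow> ('e \<Rightarrow> real) \<Rightarrow> ('e \<Rightarrow> real) \<Rightarrow> 'v \<Rightarrow> real
                      \<Rightarrow> ('e \<Rightarrow> real) \<Rightarrow> real" where
  "lp_obj E head c \<gamma> u \<delta> x =
     (\<Sum>e\<in>E. c e * x e) + \<delta> * (\<Sum>e\<in>{e\<in>E. head e = u}. \<gamma> e * x e) - \<delta>"

definition lp_optimal :: "'v set \<Rightarrow> 'e set \<Rightarrow> ('e \<Rightarrow> 'v) \<Rightarrow> ('e \<Rightarrow> 'v) \<Rightarrow> ('e \<Rightarrow> real)
                          \<Rightarrow> ('e \<Rightarrow> real) \<Rightarrow> 'v \<Rightarrow> real \<Rightarrow> ('e \<Rightarrow> real) \<Rightarrow> bool" where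
  "lp_optimal V E tail head c \<gamma> u \<delta> x \<longleftrightarrow>
     in_D V E tail head \<gamma> u x \<and>
     (\<forall>y. in_D V E tail head \<gamma> u y \<longrightarrow> lp_obj E head c \<gamma> u \<delta> x \<le> lp_obj E head c \<gamma> u \<delta> y)"

definition subpath_monotone :: "('e \<Rightarrow> 'v) \<Rightarrow> ('e \<Rightarrow> real) \<Rightarrow> 'v \<Rightarrow> nat \<Rightarrow> (nat \<Rightarrow> 'e list) \<Rightarrow> bool" where
  "subpath_monotone head \<gamma> u l P \<longleftrightarrow>
     (\<forall>i j v. i < j \<and> j < l \<and> v \<noteq> u \<and> v \<in> head ` set (P i) \<and> v \<in> head ` set (P j) \<longrightarrow>
        walk_gain \<gamma> (subpath_to head (P i) v) \<le> walk_gain \<gamma> (subpath_to head (P j) v))"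

end

theory Submission
  imports Defs
begin

(* Cut P i = A\<^sub>i B\<^sub>i and P j = A\<^sub>j B\<^sub>j after their first arcs into v. The unit flow of
   any u-u' walk Q of G\<^sub>u is feasible, with objective c(Q) + \<delta> (\<gamma>(Q) - 1), and swapping the
   prefixes yields the u-u' walks A\<^sub>j B\<^sub>i and A\<^sub>i B\<^sub>j. With \<mu> = c(B) + \<delta> \<gamma>(B) taken at the
   respective \<delta>, optimality of P i against A\<^sub>j B\<^sub>i and of P j against A\<^sub>i B\<^sub>j add up to
   (\<gamma>(A\<^sub>i) - \<gamma>(A\<^sub>j)) (\<mu>\<^sub>i - \<mu>\<^sub>j) \<le> 0, while optimality of P j against A\<^sub>j B\<^sub>i and
   \<delta> j < \<delta> i give \<mu>\<^sub>j < \<mu>\<^sub>i. *)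

(* A u-u' walk of G\<^sub>u, read in G: it leaves u and re-enters u only with its last arc. *)

definition is_split_walk :: "'e set \<Rightarrow> ('e \<Rightarrow> 'v) \<Rightarrow> ('e \<Rightarrow> 'v) \<Rightarrow> 'v \<Rightarrow> 'e list \<Rightarrow> bool" where
  "is_split_walk E tail head u Q \<longleftrightarrow>
     Q \<noteq> [] \<and> set Q \<subseteq> E \<and> successively (\<lambda>e f. head e = tail f) Q \<and>
     tail (hd Q) = u \<and> head (last Q) = u \<and> u \<notin> head ` set (butlast Q)"

fun walk_cost :: "('e \<Rightarrow> real) \<Rightarrow> ('e \<Rightarrow> real) \<Rightarrow> 'e list \<Rightarrow> real" where
  "walk_cost c \<gamma> [] = 0"
| "walk_cost c \<gamma> (e # Q) = c e + \<gamma> e * walk_cost c \<gamma> Q"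

lemma walk_gain_Nil [simp]: "walk_gain \<gamma> [] = 1"
  and walk_gain_Cons [simp]: "walk_gain \<gamma> (e # Q) = \<gamma> e * walk_gain \<gamma> Q"
  by (simp_all add: walk_gain_def)

lemma walk_gain_append: "walk_gain \<gamma> (A @ B) = walk_gain \<gamma> A * walk_gain \<gamma> B"
  by (simp add: walk_gain_def)

lemma walk_gain_pos: "\<forall>e\<in>set Q. 0 < \<gamma> e \<Longrightarrow> 0 < walk_gain \<gamma> Q"
  by (induction Q) auto

lemma walk_cost_append:
  "walk_cost c \<gamma> (A @ B) = walk_cost c \<gamma> A + walk_gain \<gamma> A * walk_cost c \<gamma> B"
  by (induction A) (auto simp: algebra_simps)

lemma tails_tl_eq_heads_butlast:
  "successively (\<lambda>e f. head e = tail f) Q \<Longrightarrow> map tail (tl Q) = map head (butlast Q)"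
  by (induction Q rule: induct_list012) auto

lemma split_path_is_split_walk:
  assumes "is_split_path E tail head u P"
  shows "is_split_walk E tail head u P"
proof -
  have P: "P \<noteq> []" "set P \<subseteq> E" "tail (hd P) = u" "head (last P) = u"
    and link: "\<And>k. Suc k < length P \<Longrightarrow> head (P ! k) \<noteq> u \<and> head (P ! k) = tail (P ! Suc k)"
    using assms unfolding is_split_path_def split_head_def split_tail_def
    by (auto simp: hd_conv_nth split: if_splits)
  have "successively (\<lambda>e f. head e = tail f) P"
    using link by (simp add: successively_conv_nth)
  moreover have "u \<notin> head ` set (butlast P)"
  proof
    assume "u \<in> head ` set (butlast P)"
    then obtain k where "k < length (butlast P)" "head (butlast P ! k) = u"
      by (auto simp: in_set_conv_nth)
    with link[of k] show False
      by (simp add: nth_butlast less_diff_conv)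
  qed
  ultimately show ?thesis
    using P by (simp add: is_split_walk_def)
qed

lemma split_walk_exchange:
  assumes "is_split_walk E tail head u (A @ B)" "is_split_walk E tail head u (A' @ B')"
    and "A \<noteq> []" "A' \<noteq> []" "head (last A) = head (last A')" "head (last A) \<noteq> u"
  shows "is_split_walk E tail head u (A @ B')"
proof -
  have "B \<noteq> []" "B' \<noteq> []"
    using assms(1,2,5,6) by (auto simp: is_split_walk_def)
  with assms show ?thesis
    by (auto simp: is_split_walk_def successively_append_iff butlast_append)
qed

lemma subpath_to_prefix:
  assumes "v \<in> head ` set Q"
  obtains B where "Q = subpath_to head Q v @ B" "subpath_to head Q v \<noteq> []"
    "head (last (subpath_to head Q v)) = v"
proof -
  define k where "k = (LEAST k. k < length Q \<and> head (Q ! k) = v)"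
  have "\<exists>k. k < length Q \<and> head (Q ! k) = v"
    using assms by (auto simp: in_set_conv_nth)
  then have k: "k < length Q" "head (Q ! k) = v"
    unfolding k_def by (metis (mono_tags, lifting) LeastI_ex)+
  have prefix: "subpath_to head Q v = take (Suc k) Q"
    by (simp add: subpath_to_def k_def)
  show ?thesis
  proof (rule that[of "drop (Suc k) Q"])
    show "Q = subpath_to head Q v @ drop (Suc k) Q"
      unfolding prefix by simp
    show "subpath_to head Q v \<noteq> []" "head (last (subpath_to head Q v)) = v"
      unfolding prefix using k by (simp_all add: take_Suc_conv_app_nth)
  qed
qed

lemma unit_flow_Nil [simp]: "unit_flow \<gamma> [] e = 0"
  by (simp add: unit_flow_def)

lemma unit_flow_Cons:
  "unit_flow \<gamma> (a # Q) e = (if a = e then 1 else 0) + \<gamma> a * unit_flow \<gamma> Q e"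
  unfolding unit_flow_def
  by (simp only: length_Cons sum.lessThan_Suc_shift)
    (simp add: sum_distrib_left if_distrib cong: if_cong)

lemma unit_flow_not_in_set: "e \<notin> set Q \<Longrightarrow> unit_flow \<gamma> Q e = 0"
  by (induction Q) (auto simp: unit_flow_Cons)

lemma unit_flow_nonneg: "\<forall>e\<in>set Q. 0 \<le> \<gamma> e \<Longrightarrow> 0 \<le> unit_flow \<gamma> Q e"
  by (induction Q) (auto simp: unit_flow_Cons)

lemma sum_unit_flow_Cons:
  assumes "finite S"
  shows "(\<Sum>e\<in>S. f e * unit_flow \<gamma> (a # Q) e) =
      (if a \<in> S then f a else 0) + \<gamma> a * (\<Sum>e\<in>S. f e * unit_flow \<gamma> Q e)"
    and "(\<Sum>e\<in>S. unit_flow \<gamma> (a # Q) e) =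
      (if a \<in> S then 1 else 0) + \<gamma> a * (\<Sum>e\<in>S. unit_flow \<gamma> Q e)"
proof -
  show weighted: "(\<Sum>e\<in>S. f e * unit_flow \<gamma> (a # Q) e) =
      (if a \<in> S then f a else 0) + \<gamma> a * (\<Sum>e\<in>S. f e * unit_flow \<gamma> Q e)" for f
  proof -
    have "(\<Sum>e\<in>S. f e * unit_flow \<gamma> (a # Q) e) =
        (\<Sum>e\<in>S. (if a = e then f e else 0) + \<gamma> a * (f e * unit_flow \<gamma> Q e))"
      by (intro sum.cong) (auto simp: unit_flow_Cons algebra_simps)
    then show ?thesis
      using assms by (simp add: sum.distrib sum_distrib_left sum.delta)
  qed
  from weighted[of "\<lambda>_. 1"] show "(\<Sum>e\<in>S. unit_flow \<gamma> (a # Q) e) =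
      (if a \<in> S then 1 else 0) + \<gamma> a * (\<Sum>e\<in>S. unit_flow \<gamma> Q e)"
    by simp
qed

lemma sum_unit_flow_eq_walk_cost:
  "finite E \<Longrightarrow> set Q \<subseteq> E \<Longrightarrow> (\<Sum>e\<in>E. c e * unit_flow \<gamma> Q e) = walk_cost c \<gamma> Q"
  by (induction Q) (simp_all add: sum_unit_flow_Cons)

lemma unit_flow_balance:
  assumes "finite E" "set Q \<subseteq> E" "Q \<noteq> []" "successively (\<lambda>e f. head e = tail f) Q"
  shows "(\<Sum>e\<in>{e\<in>E. tail e = v}. unit_flow \<gamma> Q e)
           - (\<Sum>e\<in>{e\<in>E. head e = v}. \<gamma> e * unit_flow \<gamma> Q e)
         = (if tail (hd Q) = v then 1 else 0) - (if head (last Q) = v then walk_gain \<gamma> Q else 0)"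
  using assms(3,2,4)
proof (induction Q rule: list_nonempty_induct)
  case (single a)
  then show ?case
    using assms(1) by (simp add: sum_unit_flow_Cons)
next
  case (cons a Q)
  let ?net = "\<lambda>Q. (\<Sum>e\<in>{e\<in>E. tail e = v}. unit_flow \<gamma> Q e)
                   - (\<Sum>e\<in>{e\<in>E. head e = v}. \<gamma> e * unit_flow \<gamma> Q e)"
  have link: "head a = tail (hd Q)" and "successively (\<lambda>e f. head e = tail f) Q"
    using cons by (simp_all add: successively_Cons)
  then have IH: "?net Q = (if head a = v then 1 else 0)
      - (if head (last Q) = v then walk_gain \<gamma> Q else 0)"
    using cons by simp
  have "?net (a # Q) = (if tail a = v then 1 else 0) - (if head a = v then \<gamma> a else 0)
      + \<gamma> a * ?net Q"
    using assms(1) cons.prems by (simp add: sum_unit_flow_Cons algebra_simps)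
  also have "\<dots> = (if tail a = v then 1 else 0)
      - (if head (last Q) = v then \<gamma> a * walk_gain \<gamma> Q else 0)"
    unfolding IH by (simp add: algebra_simps)
  finally show ?case
    using cons.hyps by simp
qed

lemma split_walk_unit_flow_out_start:
  assumes "finite E" "is_split_walk E tail head u Q"
  shows "(\<Sum>e\<in>{e\<in>E. tail e = u}. unit_flow \<gamma> Q e) = 1"
proof -
  obtain a Q' where Q: "Q = a # Q'"
    using assms(2) by (cases Q) (auto simp: is_split_walk_def)
  have "u \<notin> tail ` set Q'"
    using assms(2) tails_tl_eq_heads_butlast[of head tail Q]
    by (simp add: is_split_walk_def Q flip: set_map)
  then have "(\<Sum>e\<in>{e\<in>E. tail e = u}. unit_flow \<gamma> Q' e) = 0"
    by (intro sum.neutral) (auto intro: unit_flow_not_in_set)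
  with assms show ?thesis
    by (simp add: sum_unit_flow_Cons Q is_split_walk_def)
qed

lemma split_walk_unit_flow_in_D:
  assumes "finite E" "\<forall>e\<in>E. 0 < \<gamma> e" "is_split_walk E tail head u Q"
  shows "in_D V E tail head \<gamma> u (unit_flow \<gamma> Q)"
proof -
  have "\<forall>e\<in>set Q. 0 \<le> \<gamma> e"
    using assms(2,3) by (auto simp: is_split_walk_def less_imp_le)
  then show ?thesis
    using assms unit_flow_balance[OF assms(1), where Q = Q and head = head and tail = tail]
      split_walk_unit_flow_out_start[OF assms(1,3)]
    by (auto simp: in_D_def is_split_walk_def intro!: unit_flow_nonneg)
qed

lemma lp_obj_split_walk:
  assumes "finite E" "is_split_walk E tail head u Q"
  shows "lp_obj E head c \<gamma> u \<delta> (unit_flow \<gamma> Q) = walk_cost c \<gamma> Q + \<delta> * walk_gain \<gamma> Q - \<delta>"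
proof -
  have "(\<Sum>e\<in>{e\<in>E. head e = u}. \<gamma> e * unit_flow \<gamma> Q e) = walk_gain \<gamma> Q"
    using assms unit_flow_balance[OF assms(1), where Q = Q and head = head and tail = tail and v = u and \<gamma> = \<gamma>]
      split_walk_unit_flow_out_start[OF assms]
    by (simp add: is_split_walk_def)
  with assms show ?thesis
    by (simp add: lp_obj_def sum_unit_flow_eq_walk_cost is_split_walk_def)
qed

lemma optimal_split_walk_le:
  assumes "finite E" "\<forall>e\<in>E. 0 < \<gamma> e"
    and "lp_optimal V E tail head c \<gamma> u \<delta> (unit_flow \<gamma> Q)"
    and "is_split_walk E tail head u Q" "is_split_walk E tail head u Q'"
  shows "walk_cost c \<gamma> Q + \<delta> * walk_gain \<gamma> Q \<le> walk_cost c \<gamma> Q' + \<delta> * walk_gain \<gamma> Q'"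
proof -
  have "lp_obj E head c \<gamma> u \<delta> (unit_flow \<gamma> Q) \<le> lp_obj E head c \<gamma> u \<delta> (unit_flow \<gamma> Q')"
    using assms(3) split_walk_unit_flow_in_D[OF assms(1,2,5)] unfolding lp_optimal_def by blast
  then show ?thesis
    by (simp add: lp_obj_split_walk[OF assms(1,4)] lp_obj_split_walk[OF assms(1,5)])
qed

lemma exchange_gain_le:
  fixes a a' b b' k k' m m' \<delta> \<delta>' :: real
  assumes "0 < a'" "0 < b" "\<delta>' < \<delta>"
    and "k + a * (m + \<delta> * b) \<le> k' + a' * (m + \<delta> * b)"
    and "k' + a' * (m' + \<delta>' * b') \<le> k + a * (m' + \<delta>' * b')"
    and "k' + a' * (m' + \<delta>' * b') \<le> k' + a' * (m + \<delta>' * b)"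
  shows "a \<le> a'"
proof -
  have "m' + \<delta>' * b' \<le> m + \<delta>' * b"
    using assms(1,6) by simp
  also have "\<dots> < m + \<delta> * b"
    using assms(2,3) by simp
  finally have "0 < (m + \<delta> * b) - (m' + \<delta>' * b')"
    by simp
  moreover have "(a - a') * ((m + \<delta> * b) - (m' + \<delta>' * b')) \<le> 0"
    using assms(4,5) by (simp add: algebra_simps)
  ultimately show ?thesis
    by (simp add: mult_le_0_iff)
qed

lemma optimal_split_walks_prefix_gain_le:
  assumes "finite E" "\<forall>e\<in>E. 0 < \<gamma> e" "\<delta>' < \<delta>"
    and opt: "lp_optimal V E tail head c \<gamma> u \<delta> (unit_flow \<gamma> (A @ B))"
    and opt': "lp_optimal V E tail head c \<gamma> u \<delta>' (unit_flow \<gamma> (A' @ B'))"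
    and walk: "is_split_walk E tail head u (A @ B)"
    and walk': "is_split_walk E tail head u (A' @ B')"
    and "A \<noteq> []" "A' \<noteq> []" "head (last A) = head (last A')" "head (last A) \<noteq> u"
  shows "walk_gain \<gamma> A \<le> walk_gain \<gamma> A'"
proof -
  have exchanges: "is_split_walk E tail head u (A' @ B)" "is_split_walk E tail head u (A @ B')"
    using split_walk_exchange[OF walk' walk] split_walk_exchange[OF walk walk'] assms(8-11)
    by simp_all
  have "set A' \<subseteq> E" "set B \<subseteq> E"
    using walk walk' by (auto simp: is_split_walk_def)
  with assms(2) have "0 < walk_gain \<gamma> A'" "0 < walk_gain \<gamma> B"
    by (auto intro!: walk_gain_pos)
  from this assms(3) show ?thesis
  proof (rule exchange_gain_le)
    show "walk_cost c \<gamma> A + walk_gain \<gamma> A * (walk_cost c \<gamma> B + \<delta> * walk_gain \<gamma> B)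
        \<le> walk_cost c \<gamma> A' + walk_gain \<gamma> A' * (walk_cost c \<gamma> B + \<delta> * walk_gain \<gamma> B)"
      using optimal_split_walk_le[OF assms(1,2) opt walk exchanges(1)]
      by (simp add: walk_cost_append walk_gain_append algebra_simps)
    show "walk_cost c \<gamma> A' + walk_gain \<gamma> A' * (walk_cost c \<gamma> B' + \<delta>' * walk_gain \<gamma> B')
        \<le> walk_cost c \<gamma> A + walk_gain \<gamma> A * (walk_cost c \<gamma> B' + \<delta>' * walk_gain \<gamma> B')"
      using optimal_split_walk_le[OF assms(1,2) opt' walk' exchanges(2)]
      by (simp add: walk_cost_append walk_gain_append algebra_simps)
    show "walk_cost c \<gamma> A' + walk_gain \<gamma> A' * (walk_cost c \<gamma> B' + \<delta>' * walk_gain \<gamma> B')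
        \<le> walk_cost c \<gamma> A' + walk_gain \<gamma> A' * (walk_cost c \<gamma> B + \<delta>' * walk_gain \<gamma> B)"
      using optimal_split_walk_le[OF assms(1,2) opt' walk' exchanges(1)]
      by (simp add: walk_cost_append walk_gain_append algebra_simps)
  qed
qed

theorem lemma4p10:
  fixes V :: "'v set" and E :: "'e set" and tail head :: "'e \<Rightarrow> 'v"
    and c \<gamma> :: "'e \<Rightarrow> real" and u :: 'v
    and l :: nat and \<delta> :: "nat \<Rightarrow> real" and P :: "nat \<Rightarrow> 'e list"
  assumes "finite V" and "finite E"
    and "\<forall>e\<in>E. tail e \<in> V \<and> head e \<in> V"
    and "\<forall>e\<in>E. 0 < \<gamma> e"
    and "u \<in> V"
    and "\<forall>i j. i < j \<and> j < l \<longrightarrow> \<delta> j < \<delta> i"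
    and "\<forall>i<l. is_split_path E tail head u (P i)"
    and "\<forall>i<l. lp_optimal V E tail head c \<gamma> u (\<delta> i) (unit_flow \<gamma> (P i))"
  shows "subpath_monotone head \<gamma> u l P"
  unfolding subpath_monotone_def
proof (intro allI impI)
  fix i j v
  assume "i < j \<and> j < l \<and> v \<noteq> u \<and> v \<in> head ` set (P i) \<and> v \<in> head ` set (P j)"
  then have ij: "i < j" "j < l" and v: "v \<noteq> u" "v \<in> head ` set (P i)" "v \<in> head ` set (P j)"
    by auto
  define Ai where "Ai = subpath_to head (P i) v"
  define Aj where "Aj = subpath_to head (P j) v"
  obtain Bi where Bi: "P i = Ai @ Bi" "Ai \<noteq> []" "head (last Ai) = v"
    using subpath_to_prefix[OF v(2)] unfolding Ai_def by blast
  obtain Bj where Bj: "P j = Aj @ Bj" "Aj \<noteq> []" "head (last Aj) = v"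
    using subpath_to_prefix[OF v(3)] unfolding Aj_def by blast
  have "i < l"
    using ij by simp
  with assms(7,8) have walk_i: "is_split_walk E tail head u (Ai @ Bi)"
    and opt_i: "lp_optimal V E tail head c \<gamma> u (\<delta> i) (unit_flow \<gamma> (Ai @ Bi))"
    by (simp_all add: split_path_is_split_walk flip: Bi(1))
  from ij(2) assms(7,8) have walk_j: "is_split_walk E tail head u (Aj @ Bj)"
    and opt_j: "lp_optimal V E tail head c \<gamma> u (\<delta> j) (unit_flow \<gamma> (Aj @ Bj))"
    by (simp_all add: split_path_is_split_walk flip: Bj(1))
  have "\<delta> j < \<delta> i"
    using ij assms(6) by blast
  from assms(2,4) this opt_i opt_j walk_i walk_j Bi(2) Bj(2)
  have "walk_gain \<gamma> Ai \<le> walk_gain \<gamma> Aj"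
    by (rule optimal_split_walks_prefix_gain_le) (simp_all add: Bi(3) Bj(3) v(1))
  then show "walk_gain \<gamma> (subpath_to head (P i) v) \<le> walk_gain \<gamma> (subpath_to head (P j) v)"
    by (simp add: Ai_def Aj_def)
qed

end
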